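(* Let $\lambda$ be a polynomial $\mathfrak{gl}_{m|n}$ weight, $a\in\{0,1,\dots,m\}$, $b\in\{0,1,\dots,n\}$, and \[\boldsymbol A=(\lambda_m+\lambda_{m+1}<\lambda_{m-1}+\lambda_{m+1}+1<\dots<\lambda_{m-a+1}+\lambda_{m+1}+a-1),\] \[\boldsymbol B=(0<\lambda_{m+1}-\lambda_{m+2}+1<\dots<\lambda_{m+1}-\lambda_{m+b}+b-1)\] (i.e. $\boldsymbol A=\{\lambda_{m-k+1}+\lambda_{m+1}+k-1\}_{k=1}^a$, $\boldsymbol B=\{\lambda_{m+1}-\lambda_{m+k}+k-1\}_{k=1}^b$). Then the dominant of the partition $\boldsymbol A\sqcup\boldsymbol B$ is: (1) if $b\le\lambda_m$: $(0<\lambda_{m+1}-\lambda_{m+2}+1<\dots<\lambda_{m+1}-\lambda_{m+b}+b-1<\lambda_m+\lambda_{m+1}<\dots<\lambda_{m-a+1}+\lambda_{m+1}+a-1)$; (2) if $\lambda_{m-j+1}<b\le\lambda_{m-j}$ for some $1\le j\le a-1$: $(0<\lambda_{m+1}-\lambda_{m+2}+1<\dots<\lambda_{m+1}-\lambda_{m+b}+b-1<\lambda_{m+1}+b<\lambda_{m+1}+b+1<\dots<\lambda_{m+1}+b+j-1<\lambda_{m-j}+\lambda_{m+1}+j<\dots<\lambda_{m-a+1}+\lambda_{m+1}+a-1)$; (3) if $\lambda_{m-a+1}<b$: $(0<\lambda_{m+1}-\lambda_{m+2}+1<\dots<\lambda_{m+1}-\lambda_{m+b}+b-1<\lambda_{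m+1}+b<\lambda_{m+1}+b+1<\dots<\lambda_{m+1}+b+a-1)$.
   Context: A polynomial $\mathfrak{gl}_{m|n}$ weight is $\lambda=(\lambda_1,\dots,\lambda_{m+n})\in\mathbb{Z}^{m+n}_{\ge0}$ with $\lambda_1\ge\dots\ge\lambda_m$, $\lambda_{m+1}\ge\dots\ge\lambda_{m+n}$, and $\lambda_{m+k}=0$ whenever $k>\lambda_m$. A partition with $r$ parts is a weakly increasing sequence $\boldsymbol a=(a_1\le\dots\le a_r)$ of nonnegative integers; a finite multiset of nonnegative integers is identified with the partition obtained by sorting it, and $\sqcup$ denotes multiset union. $\boldsymbol b$ dominates $\boldsymbol a$ (both with $r$ parts) if $b_i\ge a_i$ for all $i$. The dominant $\bar{\boldsymbol a}$ of $\boldsymbol a$ is the unique partition with $r$ distinct parts which dominates $\boldsymbol a$ and is dominated by every partition with $r$ distinct parts dominating $\boldsymbol a$. *)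

theory Defs
  imports Main
begin

text \<open>A weight lam is given 1-indexed as a function nat => nat (only the values
  lam 1, ..., lam (m+n) matter).\<close>
definition poly_weight :: "nat \<Rightarrow> nat \<Rightarrow> (nat \<Rightarrow> nat) \<Rightarrow> bool" where
  "poly_weight m n lam \<longleftrightarrow>
     (\<forall>i. 1 \<le> i \<and> i < m \<longrightarrow> lam (i+1) \<le> lam i) \<and>
     (\<forall>k. 1 \<le> k \<and> k < n \<longrightarrow> lam (m+k+1) \<le> lam (m+k)) \<and>
     (\<forall>k. 1 \<le> k \<and> k \<le> n \<and> lam m < k \<longrightarrow> lam (m+k) = 0)"

definition is_partition :: "nat list \<Rightarrow> bool" where
  "is_partition a \<longleftrightarrow> sorted a"

definition distinct_partition :: "nat list \<Rightarrow> bool" where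
  "distinct_partition a \<longleftrightarrow> sorted_wrt (<) a"

definition part_union :: "nat list \<Rightarrow> nat list \<Rightarrow> nat list" where
  "part_union a b = sort (a @ b)"

definition dominates :: "nat list \<Rightarrow> nat list \<Rightarrow> bool" where
  "dominates b a \<longleftrightarrow> length b = length a \<and> (\<forall>i < length a. a ! i \<le> b ! i)"

definition dominant :: "nat list \<Rightarrow> nat list" where
  "dominant a = (THE d. distinct_partition d \<and> dominates d a \<and>
      (\<forall>e. distinct_partition e \<and> dominates e a \<longrightarrow> dominates e d))"

end

theory Submission
  imports Defs
begin

text \<open>The dominant of s is determined entrywise: its i-th entry is the least value above s ! i
  and above every s ! p + (i - p) with p \<le> i, since a strictly increasing list climbs by at
  least one per step. Entries of a sorted list are located by counting how many entries lie
  below a given value. Here B stays below lam (m+1) + b and coincides with the run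
  lam (m+1) + k - 1 once k > lam m, while A starts at lam m + lam (m+1). So the dominant is B,
  followed by the continued run lam (m+1) + b, lam (m+1) + b + 1, ... for as long as it
  overtakes entries of A (those with lam (m-k+1) < b), followed by the rest of A.\<close>

lemma dominates_antisym: "dominates d e \<Longrightarrow> dominates e d \<Longrightarrow> d = e"
  unfolding dominates_def by (metis nth_equalityI order_antisym)

lemma dominant_eqI:
  assumes "distinct_partition d" and "dominates d s"
    and "\<And>e. distinct_partition e \<Longrightarrow> dominates e s \<Longrightarrow> dominates e d"
  shows "dominant s = d"
  unfolding dominant_def
  by (rule the_equality) (use assms dominates_antisym in blast)+

lemma sorted_wrt_less_nth_add_le:
  fixes e :: "nat list"
  assumes "sorted_wrt (<) e" and "p \<le> i" and "i < length e"
  shows "e ! p + (i - p) \<le> e ! i"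
  using assms(2,3)
proof (induction i rule: dec_induct)
  case (step i)
  then have "e ! i < e ! Suc i"
    using assms(1) by (simp add: sorted_wrt_nth_less)
  with step show ?case by simp
qed simp

lemma dominant_eqI_nth:
  fixes s d :: "nat list"
  assumes len: "length d = length s" and inc: "sorted_wrt (<) d"
    and above: "\<And>i. i < length s \<Longrightarrow> s ! i \<le> d ! i"
    and forced: "\<And>i. i < length s \<Longrightarrow> \<exists>p\<le>i. d ! i \<le> s ! p + (i - p)"
  shows "dominant s = d"
proof (rule dominant_eqI)
  show "distinct_partition d" using inc by (simp add: distinct_partition_def)
  show "dominates d s" using len above by (simp add: dominates_def)
next
  fix e assume e: "distinct_partition e" "dominates e s"
  have "d ! i \<le> e ! i" if i: "i < length s" for i
  proof -
    obtain p where p: "p \<le> i" "d ! i \<le> s ! p + (i - p)" using forced i by blast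
    moreover have "s ! p \<le> e ! p" using e(2) p(1) i by (simp add: dominates_def)
    ultimately have "d ! i \<le> e ! p + (i - p)" by linarith
    also have "\<dots> \<le> e ! i"
      using e p i by (intro sorted_wrt_less_nth_add_le) (auto simp: distinct_partition_def dominates_def)
    finally show ?thesis .
  qed
  then show "dominates e d" using e(2) len by (simp add: dominates_def)
qed

lemma le_sort_nth:
  fixes xs :: "nat list"
  assumes "p < length xs" and "length (filter (\<lambda>y. y < v) xs) \<le> p"
  shows "v \<le> sort xs ! p"
proof (rule ccontr)
  assume "\<not> v \<le> sort xs ! p"
  then have "{0..p} \<subseteq> {q. q < length (sort xs) \<and> sort xs ! q < v}"
    using assms(1) sorted_nth_mono[OF sorted_sort, of _ p xs] by fastforce
  then have "Suc p \<le> length (filter (\<lambda>y. y < v) (sort xs))"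
    unfolding length_filter_conv_card
    by (metis card_atLeastAtMost card_mono diff_zero finite_Collect_conjI finite_Collect_less_nat)
  then show False using assms(2) by (simp add: filter_sort)
qed

lemma sort_nth_le:
  fixes xs :: "nat list"
  assumes "i < length (filter (\<lambda>y. y \<le> w) xs)"
  shows "sort xs ! i \<le> w"
proof (rule ccontr)
  assume "\<not> sort xs ! i \<le> w"
  then have "{q. q < length (sort xs) \<and> sort xs ! q \<le> w} \<subseteq> {..<i}"
    using sorted_nth_mono[OF sorted_sort, of i _ xs] by (force simp: not_less[symmetric])
  then have "length (filter (\<lambda>y. y \<le> w) (sort xs)) \<le> i"
    unfolding length_filter_conv_card by (metis card_lessThan card_mono finite_lessThan)
  then show False using assms by (simp add: filter_sort)
qed

lemma length_filter_map_upt_conv_card: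
  "length (filter P (map f [1..<N+1])) = card {k \<in> {1..N}. P (f k)}"
proof -
  have "length (filter P (map f [1..<N+1])) = card ({k. P (f k)} \<inter> set [1..<N+1])"
    by (simp add: length_filter_map distinct_length_filter comp_def del: upt_Suc)
  also have "{k. P (f k)} \<inter> set [1..<N+1] = {k \<in> {1..N}. P (f k)}"
    by auto
  finally show ?thesis .
qed

lemma length_filter_map_upt_le:
  assumes "\<And>k. 1 \<le> k \<Longrightarrow> k \<le> N \<Longrightarrow> P (f k) \<Longrightarrow> k \<le> r"
  shows "length (filter P (map f [1..<N+1])) \<le> r"
proof -
  have "card {k \<in> {1..N}. P (f k)} \<le> card {1..r}"
    using assms by (intro card_mono) auto
  then show ?thesis by (simp only: length_filter_map_upt_conv_card card_atLeastAtMost diff_Suc_1)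
qed

lemma length_filter_map_upt_ge:
  assumes "r \<le> N" and "\<And>k. 1 \<le> k \<Longrightarrow> k \<le> r \<Longrightarrow> P (f k)"
  shows "r \<le> length (filter P (map f [1..<N+1]))"
proof -
  have "card {1..r} \<le> card {k \<in> {1..N}. P (f k)}"
    using assms by (intro card_mono) auto
  then show ?thesis by (simp only: length_filter_map_upt_conv_card card_atLeastAtMost diff_Suc_1)
qed

text \<open>In the application fB and fA list B and A, L = lam (m+1) and c = lam m.\<close>

context
  fixes a b j L c :: nat and fA fB :: "nat \<Rightarrow> nat"
  assumes j_le_a: "j \<le> a"
    and fB_strict: "strict_mono_on {1..b} fB"
    and fB_le: "\<And>k. 1 \<le> k \<Longrightarrow> k \<le> b \<Longrightarrow> fB k \<le> L + k - 1"
    and fB_eq: "\<And>k. c < k \<Longrightarrow> k \<le> b \<Longrightarrow> fB k = L + k - 1"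
    and fA_strict: "strict_mono_on {1..a} fA"
    and fA_ge: "\<And>k. 1 \<le> k \<Longrightarrow> k \<le> a \<Longrightarrow> L + c + k - 1 \<le> fA k"
    and fA_below: "\<And>k. 1 \<le> k \<Longrightarrow> k \<le> j \<Longrightarrow> fA k < L + b + k - 1"
    and fA_above: "\<And>k. j < k \<Longrightarrow> k \<le> a \<Longrightarrow> L + b + k - 1 \<le> fA k"
begin

abbreviation (input) entries_AB :: "nat list" where
  "entries_AB \<equiv> map fA [1..<a+1] @ map fB [1..<b+1]"

definition dominant_entry :: "nat \<Rightarrow> nat" where
  "dominant_entry i = (if i < b then fB (i+1) else if i < b + j then L + i else fA (i - b + 1))"

lemma map_dominant_entry:
  "map dominant_entry [0..<b+a] = map fB [1..<b+1] @ map (\<lambda>i. L + b + i) [0..<j] @ map fA [j+1..<a+1]"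
  (is "_ = ?d")
proof (rule nth_equalityI)
  show "length (map dominant_entry [0..<b+a]) = length ?d" using j_le_a by simp
next
  fix i assume "i < length (map dominant_entry [0..<b+a])"
  then have "i < b + a" by simp
  then show "map dominant_entry [0..<b+a] ! i = ?d ! i"
    using j_le_a by (auto simp: nth_append dominant_entry_def simp del: upt_Suc)
qed

lemma dominant_entry_less_Suc:
  assumes "Suc i < b + a"
  shows "dominant_entry i < dominant_entry (Suc i)"
proof -
  consider "Suc i < b" | "Suc i = b" | "b \<le> i" "Suc i < b + j" | "b \<le> i" "Suc i = b + j" | "b + j \<le> i"
    by linarith
  then show ?thesis
  proof cases
    case 1
    then show ?thesis using strict_mono_onD[OF fB_strict, of "i+1" "i+2"] by (simp add: dominant_entry_def)
  next
    case 2
    then have "fB (i+1) < L + b" using fB_le[of "i+1"] by simp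
    moreover have "j = 0 \<Longrightarrow> L + b \<le> fA 1" using fA_above[of 1] assms 2 by simp
    ultimately show ?thesis using 2 by (auto simp: dominant_entry_def)
  next
    case 3
    then show ?thesis by (simp add: dominant_entry_def)
  next
    case 4
    then show ?thesis using fA_above[of "j+1"] assms by (auto simp: dominant_entry_def)
  next
    case 5
    then show ?thesis using strict_mono_onD[OF fA_strict, of "i - b + 1" "i - b + 2"] assms
      by (simp add: dominant_entry_def Suc_diff_le)
  qed
qed

lemma sort_nth_le_dominant_entry:
  assumes i: "i < b + a"
  shows "sort entries_AB ! i \<le> dominant_entry i"
proof (rule sort_nth_le)
  let ?count = "\<lambda>f n. length (filter (\<lambda>y. y \<le> dominant_entry i) (map f [1..<n+1]))"
  have "i + 1 \<le> ?count fA a + ?count fB b"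
  proof -
    consider "i < b" | "b \<le> i" "i < b + j" | "b + j \<le> i" by linarith
    then show ?thesis
    proof cases
      case 1
      have "i + 1 \<le> ?count fB b"
        by (rule length_filter_map_upt_ge)
          (use 1 strict_mono_on_leD[OF fB_strict] in \<open>auto simp: dominant_entry_def\<close>)
      then show ?thesis by simp
    next
      case 2
      have "b \<le> ?count fB b"
        by (rule length_filter_map_upt_ge) (use 2 fB_le in \<open>force simp: dominant_entry_def\<close>)+
      moreover have "i - b + 1 \<le> ?count fA a"
        by (rule length_filter_map_upt_ge)
          (use 2 j_le_a fA_below in \<open>force simp: dominant_entry_def\<close>)+
      ultimately show ?thesis using 2 by simp
    next
      case 3
      then have A_entry: "dominant_entry i = fA (i - b + 1)"
        by (simp add: dominant_entry_def)
      have "b \<le> ?count fB b"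
      proof (rule length_filter_map_upt_ge)
        fix k assume "1 \<le> k" "k \<le> b"
        then have "fB k < L + b + (i - b + 1) - 1" using fB_le[of k] by simp
        also have "\<dots> \<le> dominant_entry i" using fA_above[of "i - b + 1"] 3 i A_entry by simp
        finally show "fB k \<le> dominant_entry i" by simp
      qed simp
      moreover have "i - b + 1 \<le> ?count fA a"
        by (rule length_filter_map_upt_ge)
          (use 3 i A_entry strict_mono_on_leD[OF fA_strict] in \<open>auto simp: dominant_entry_def\<close>)
      ultimately show ?thesis using 3 by simp
    qed
  qed
  then show "i < length (filter (\<lambda>y. y \<le> dominant_entry i) entries_AB)" by simp
qed

lemma L_plus_c_le_sort_nth:
  assumes "c < b + a"
  shows "L + c \<le> sort entries_AB ! c"
proof (rule le_sort_nth)
  have "length (filter (\<lambda>y. y < L + c) (map fA [1..<a+1])) \<le> 0"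
    by (rule length_filter_map_upt_le) (use fA_ge in force)
  moreover have "length (filter (\<lambda>y. y < L + c) (map fB [1..<b+1])) \<le> c"
  proof (rule length_filter_map_upt_le)
    fix k assume "k \<le> b" and "fB k < L + c"
    then show "k \<le> c" using fB_eq[of k] by (cases "c < k") auto
  qed
  ultimately show "length (filter (\<lambda>y. y < L + c) entries_AB) \<le> c" by simp
qed (use assms in simp)

lemma dominant_entry_le_sort_nth:
  assumes i: "i < b + a" and "i < b \<and> i < c \<or> b + j \<le> i"
  shows "dominant_entry i \<le> sort entries_AB ! i"
proof (rule le_sort_nth)
  let ?count = "\<lambda>f n. length (filter (\<lambda>y. y < dominant_entry i) (map f [1..<n+1]))"
  consider "i < b" "i < c" | "b + j \<le> i" using assms(2) by blast
  then have "?count fA a + ?count fB b \<le> i"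
  proof cases
    case 1
    then have B_entry: "dominant_entry i \<le> L + i" using fB_le[of "i+1"] by (simp add: dominant_entry_def)
    have "?count fA a \<le> 0"
      by (rule length_filter_map_upt_le) (use 1 fA_ge B_entry in force)
    moreover have "?count fB b \<le> i"
      by (rule length_filter_map_upt_le)
        (use 1 strict_mono_on_less[OF fB_strict] in \<open>auto simp: dominant_entry_def\<close>)
    ultimately show ?thesis by simp
  next
    case 2
    have "?count fA a \<le> i - b"
      by (rule length_filter_map_upt_le)
        (use 2 i strict_mono_on_less[OF fA_strict] in \<open>auto simp: dominant_entry_def\<close>)
    moreover have "?count fB b \<le> b"
      by (rule length_filter_map_upt_le) simp
    ultimately show ?thesis using 2 by simp
  qed
  then show "length (filter (\<lambda>y. y < dominant_entry i) entries_AB) \<le> i" by simp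
qed (use i in simp)

lemma dominant_entry_run:
  assumes "c \<le> i" and "i < b + j"
  shows "dominant_entry i = L + i"
  using assms fB_eq[of "i+1"] by (simp add: dominant_entry_def)

lemma dominant_entry_forced:
  assumes i: "i < b + a"
  shows "\<exists>p\<le>i. dominant_entry i \<le> sort entries_AB ! p + (i - p)"
proof (cases "i < b \<and> i < c \<or> b + j \<le> i")
  case True
  then show ?thesis using dominant_entry_le_sort_nth[OF i] by auto
next
  case False
  have "c < b" if "1 \<le> j" using fA_ge[of 1] fA_below[of 1] j_le_a that by simp
  with False have "c \<le> i" "i < b + j" by auto
  then have "dominant_entry i \<le> sort entries_AB ! c + (i - c)"
    using dominant_entry_run L_plus_c_le_sort_nth i by simp
  with \<open>c \<le> i\<close> show ?thesis by blast
qed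

lemma dominant_part_union:
  "dominant (part_union (map fA [1..<a+1]) (map fB [1..<b+1])) =
    map fB [1..<b+1] @ map (\<lambda>i. L + b + i) [0..<j] @ map fA [j+1..<a+1]"
  unfolding part_union_def map_dominant_entry[symmetric]
proof (rule dominant_eqI_nth)
  show "sorted_wrt (<) (map dominant_entry [0..<b+a])"
    by (simp add: sorted_wrt_iff_nth_Suc_transp dominant_entry_less_Suc del: upt_Suc)
next
  fix i assume "i < length (sort entries_AB)"
  then have "i < b + a" by (simp del: upt_Suc)
  then show "sort entries_AB ! i \<le> map dominant_entry [0..<b+a] ! i"
    and "\<exists>p\<le>i. map dominant_entry [0..<b+a] ! i \<le> sort entries_AB ! p + (i - p)"
    using sort_nth_le_dominant_entry dominant_entry_forced by simp_all
qed simp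

end

lemma poly_weight_antimono_even:
  assumes "poly_weight m n lam" and "1 \<le> i" and "i \<le> k" and "k \<le> m"
  shows "lam k \<le> lam i"
  using assms(3,4)
proof (induction k rule: dec_induct)
  case (step k)
  then have "lam (k+1) \<le> lam k" using assms(1,2) by (simp add: poly_weight_def)
  with step show ?case by simp
qed simp

lemma poly_weight_antimono_odd:
  assumes "poly_weight m n lam" and "1 \<le> i" and "i \<le> k" and "k \<le> n"
  shows "lam (m + k) \<le> lam (m + i)"
  using assms(3,4)
proof (induction k rule: dec_induct)
  case (step k)
  then have "lam (m + k + 1) \<le> lam (m + k)" using assms(1,2) by (simp add: poly_weight_def)
  with step show ?case by simp
qed simp

lemma dominant_part_union_weight:
  fixes lam :: "nat \<Rightarrow> nat"
  assumes pw: "poly_weight m n lam" and "a \<le> m" and "b \<le> n" and "j \<le> a"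
    and below: "0 < j \<Longrightarrow> lam (m - j + 1) < b"
    and above: "j < a \<Longrightarrow> b \<le> lam (m - j)"
  shows "dominant (part_union (map (\<lambda>k. lam (m - k + 1) + lam (m + 1) + k - 1) [1..<a+1])
             (map (\<lambda>k. lam (m + 1) - lam (m + k) + k - 1) [1..<b+1])) =
    map (\<lambda>k. lam (m + 1) - lam (m + k) + k - 1) [1..<b+1] @ map (\<lambda>i. lam (m + 1) + b + i) [0..<j]
      @ map (\<lambda>k. lam (m - k + 1) + lam (m + 1) + k - 1) [j+1..<a+1]"
proof (rule dominant_part_union[where c = "lam m"])
  show "strict_mono_on {1..b} (\<lambda>k. lam (m + 1) - lam (m + k) + k - 1)"
  proof (rule strict_mono_onI)
    fix k k' assume "k \<in> {1..b}" "k' \<in> {1..b}" "k < k'"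
    then have "1 \<le> k" "k < k'" "k' \<le> b" by simp_all
    then have "lam (m + k') \<le> lam (m + k)" and "lam (m + k) \<le> lam (m + 1)"
      using poly_weight_antimono_odd[OF pw, of k k'] poly_weight_antimono_odd[OF pw, of 1 k] \<open>b \<le> n\<close>
      by simp_all
    with \<open>1 \<le> k\<close> \<open>k < k'\<close>
    show "lam (m + 1) - lam (m + k) + k - 1 < lam (m + 1) - lam (m + k') + k' - 1" by linarith
  qed
  show "strict_mono_on {1..a} (\<lambda>k. lam (m - k + 1) + lam (m + 1) + k - 1)"
  proof (rule strict_mono_onI)
    fix k k' assume "k \<in> {1..a}" "k' \<in> {1..a}" "k < k'"
    then have "1 \<le> k" "k < k'" "k' \<le> a" by simp_all
    then have "lam (m - k + 1) \<le> lam (m - k' + 1)"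
      using poly_weight_antimono_even[OF pw, of "m - k' + 1" "m - k + 1"] \<open>a \<le> m\<close> by simp
    with \<open>1 \<le> k\<close> \<open>k < k'\<close>
    show "lam (m - k + 1) + lam (m + 1) + k - 1 < lam (m - k' + 1) + lam (m + 1) + k' - 1" by linarith
  qed
next
  fix k assume "lam m < k" "k \<le> b"
  then have "lam (m + k) = 0" using pw \<open>b \<le> n\<close> by (auto simp: poly_weight_def)
  then show "lam (m + 1) - lam (m + k) + k - 1 = lam (m + 1) + k - 1" by simp
next
  fix k assume "1 \<le> k" "k \<le> a"
  then have "lam m \<le> lam (m - k + 1)"
    using poly_weight_antimono_even[OF pw, of "m - k + 1" m] \<open>a \<le> m\<close> by simp
  then show "lam (m + 1) + lam m + k - 1 \<le> lam (m - k + 1) + lam (m + 1) + k - 1" by simp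
next
  fix k assume "1 \<le> k" "k \<le> j"
  then have "lam (m - k + 1) \<le> lam (m - j + 1)"
    using poly_weight_antimono_even[OF pw, of "m - j + 1" "m - k + 1"] \<open>j \<le> a\<close> \<open>a \<le> m\<close> by simp
  with below \<open>1 \<le> k\<close> \<open>k \<le> j\<close>
  show "lam (m - k + 1) + lam (m + 1) + k - 1 < lam (m + 1) + b + k - 1" by linarith
next
  fix k assume "j < k" "k \<le> a"
  then have "lam (m - j) \<le> lam (m - k + 1)"
    using poly_weight_antimono_even[OF pw, of "m - k + 1" "m - j"] \<open>a \<le> m\<close> by simp
  with above \<open>j < k\<close> \<open>k \<le> a\<close>
  show "lam (m + 1) + b + k - 1 \<le> lam (m - k + 1) + lam (m + 1) + k - 1" by linarith
qed (use \<open>j \<le> a\<close> in simp_all)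

theorem lemma6p3:
  fixes m n a b :: nat and lam :: "nat \<Rightarrow> nat"
  assumes "1 \<le> m" and "1 \<le> n"
    and "poly_weight m n lam"
    and "a \<le> m" and "b \<le> n"
  defines "A \<equiv> map (\<lambda>k. lam (m - k + 1) + lam (m + 1) + k - 1) [1..<a+1]"
    and "B \<equiv> map (\<lambda>k. lam (m + 1) - lam (m + k) + k - 1) [1..<b+1]"
  shows "(b \<le> lam m \<longrightarrow> dominant (part_union A B) = B @ A)
    \<and> (\<forall>j. 1 \<le> j \<and> j \<le> a - 1 \<and> lam (m - j + 1) < b \<and> b \<le> lam (m - j) \<longrightarrow>
          dominant (part_union A B) =
            B @ map (\<lambda>i. lam (m + 1) + b + i) [0..<j]
              @ map (\<lambda>k. lam (m - k + 1) + lam (m + 1) + k - 1) [j+1..<a+1])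
    \<and> (lam (m - a + 1) < b \<longrightarrow>
          dominant (part_union A B) = B @ map (\<lambda>i. lam (m + 1) + b + i) [0..<a])"
  using dominant_part_union_weight[OF assms(3-5), of 0]
    dominant_part_union_weight[OF assms(3-5)]
    dominant_part_union_weight[OF assms(3-5), of a]
  unfolding A_def B_def by (auto simp del: upt_Suc)

end
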